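(* Let $k\le n$ be positive integers, $m=\binom nk$, let $\nu$ be a vector norm on $\mathbb{C}^n$ and $\mu$ an absolute operator norm on $\mathbb{C}^{m\times m}$. For $A\in\mathbb{C}^{n\times n}$ with eigenvalues $\lambda_1(A),\ldots,\lambda_n(A)$ ordered so that $|\lambda_1(A)|\ge\cdots\ge|\lambda_n(A)|$, $$\left|\prod_{i=1}^k\lambda_i(A)\right|\le\theta_k(\mu,\nu)\min\left\{\max_{|\alpha|=k}\prod_{i\in\alpha}\nu(\mathrm{col}_i(A)),\ \max_{|\alpha|=k}\prod_{i\in\alpha}\nu(\mathrm{row}_i(A))\right\},$$ where the maxima are over subsets $\alpha\subseteq\{1,\ldots,n\}$ with $|\alpha|=k$.
   Context: $\mathrm{col}_i(A)$ is the $i$th column of $A$ and $\mathrm{row}_i(A)\in\mathbb{C}^n$ is the transpose of the $i$th row. $C_k(B)$ is the $k$th compound of $B$ (the $\binom nk\times\binom nk$ matrix of $k\times k$ minors). $\theta_k(\mu,\nu)=\max\{\mu(C_k(B)): B\in\mathbb{C}^{n\times n},\ \nu(\mathrm{col}_i(B))=1,\ i=1,\ldots,n\}$. An absolute operator norm is a matrix norm induced by an absolute vector norm. *)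

theory Defs
  imports "Jordan_Normal_Form.Char_Poly" "Jordan_Normal_Form.DL_Submatrix"
begin

definition vec_norm_on :: "nat \<Rightarrow> (complex vec \<Rightarrow> real) \<Rightarrow> bool" where
  "vec_norm_on n \<nu> \<longleftrightarrow>
     (\<forall>x\<in>carrier_vec n. 0 \<le> \<nu> x \<and> (\<nu> x = 0 \<longleftrightarrow> x = 0\<^sub>v n)) \<and>
     (\<forall>x\<in>carrier_vec n. \<forall>c. \<nu> (c \<cdot>\<^sub>v x) = cmod c * \<nu> x) \<and>
     (\<forall>x\<in>carrier_vec n. \<forall>y\<in>carrier_vec n. \<nu> (x + y) \<le> \<nu> x + \<nu> y)"

text \<open>Index set of C^m, m = n choose k: the k-subsets of {0..<n}.\<close>
definition ksubsets :: "nat \<Rightarrow> nat \<Rightarrow> nat set set" where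
  "ksubsets n k = {\<alpha>. \<alpha> \<subseteq> {0..<n} \<and> card \<alpha> = k}"

text \<open>C^m realised as functions on the k-subsets (zero outside).\<close>
definition cvecs :: "nat \<Rightarrow> nat \<Rightarrow> (nat set \<Rightarrow> complex) set" where
  "cvecs n k = {x. \<forall>\<alpha>. \<alpha> \<notin> ksubsets n k \<longrightarrow> x \<alpha> = 0}"

definition abs_vec_norm_on :: "nat \<Rightarrow> nat \<Rightarrow> ((nat set \<Rightarrow> complex) \<Rightarrow> real) \<Rightarrow> bool" where
  "abs_vec_norm_on n k \<eta> \<longleftrightarrow>
     (\<forall>x\<in>cvecs n k. 0 \<le> \<eta> x \<and> (\<eta> x = 0 \<longleftrightarrow> x = (\<lambda>_. 0))) \<and>
     (\<forall>x\<in>cvecs n k. \<forall>c. \<eta> (\<lambda>\<alpha>. c * x \<alpha>) = cmod c * \<eta> x) \<and>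
     (\<forall>x\<in>cvecs n k. \<forall>y\<in>cvecs n k. \<eta> (\<lambda>\<alpha>. x \<alpha> + y \<alpha>) \<le> \<eta> x + \<eta> y) \<and>
     (\<forall>x\<in>cvecs n k. \<forall>y\<in>cvecs n k. (\<forall>\<alpha>. cmod (x \<alpha>) = cmod (y \<alpha>)) \<longrightarrow> \<eta> x = \<eta> y)"

text \<open>m x m matrices indexed by k-subsets, acting on C^m.\<close>
definition cmat_apply :: "nat \<Rightarrow> nat \<Rightarrow> (nat set \<Rightarrow> nat set \<Rightarrow> complex) \<Rightarrow> (nat set \<Rightarrow> complex) \<Rightarrow> (nat set \<Rightarrow> complex)" where
  "cmat_apply n k M x = (\<lambda>\<alpha>. if \<alpha> \<in> ksubsets n k then (\<Sum>\<beta>\<in>ksubsets n k. M \<alpha> \<beta> * x \<beta>) else 0)"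

definition op_norm :: "nat \<Rightarrow> nat \<Rightarrow> ((nat set \<Rightarrow> complex) \<Rightarrow> real) \<Rightarrow> (nat set \<Rightarrow> nat set \<Rightarrow> complex) \<Rightarrow> real" where
  "op_norm n k \<eta> M = (SUP x\<in>cvecs n k - {\<lambda>_. 0}. \<eta> (cmat_apply n k M x) / \<eta> x)"

definition compound :: "nat \<Rightarrow> complex mat \<Rightarrow> nat set \<Rightarrow> nat set \<Rightarrow> complex" where
  "compound k B = (\<lambda>\<alpha> \<beta>. if \<alpha> \<in> ksubsets (dim_row B) k \<and> \<beta> \<in> ksubsets (dim_row B) k
                           then det (submatrix B \<alpha> \<beta>) else 0)"

definition theta :: "nat \<Rightarrow> nat \<Rightarrow> ((nat set \<Rightarrow> complex) \<Rightarrow> real) \<Rightarrow> (complex vec \<Rightarrow> real) \<Rightarrow> real" where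
  "theta n k \<eta> \<nu> = Sup {op_norm n k \<eta> (compound k B) | B.
       B \<in> carrier_mat n n \<and> (\<forall>i<n. \<nu> (col B i) = 1)}"

end

theory Submission
  imports Defs "Jordan_Normal_Form.Schur_Decomposition" "HOL-Analysis.Elementary_Metric_Spaces"
begin

text \<open>
  By Schur's theorem \<open>A P = P S\<close> with \<open>S\<close> upper triangular with diagonal \<open>\<lambda>\<^sub>1, ..., \<lambda>\<^sub>n\<close>, so the
  first \<open>k\<close> columns \<open>W\<close> of \<open>P\<close> satisfy \<open>A W = W T\<close> with \<open>det T = \<lambda>\<^sub>1 ... \<lambda>\<^sub>k\<close>.  By the
  Cauchy--Binet formula the vector \<open>x\<close> of maximal minors of \<open>W\<close> is nonzero (\<open>W\<close> has a left
  inverse) and \<open>C\<^sub>k(A) x = det T x\<close>.  Factor \<open>A = B D\<close> with \<open>D\<close> the diagonal matrix of the column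
  norms \<open>\<nu>(col\<^sub>j A)\<close>, so that \<open>B\<close> has \<open>\<nu>\<close>-unit columns and \<open>C\<^sub>k(A) = C\<^sub>k(B) C\<^sub>k(D)\<close>, where \<open>C\<^sub>k(D)\<close>
  is diagonal with entries \<open>\<Prod>j\<in>\<beta>. \<nu>(col\<^sub>j A)\<close>.  Absolute norms are monotone, hence
  \<open>|\<lambda>\<^sub>1 ... \<lambda>\<^sub>k| \<mu>(x) \<le> \<mu>(C\<^sub>k(B)) \<mu>(C\<^sub>k(D) x) \<le> \<theta>\<^sub>k (max \<alpha>. \<Prod>i\<in>\<alpha>. \<nu>(col\<^sub>i A)) \<mu>(x)\<close>, and
  transposition gives the bound by rows.  As \<open>\<theta>\<^sub>k\<close> is a supremum it must also be shown finite:
  the entries of matrices with \<open>\<nu>\<close>-unit columns are bounded since, by compactness, every norm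
  dominates a multiple of the l1 norm.
\<close>

lemma finite_ksubsets: "finite (ksubsets n k)"
  unfolding ksubsets_def by (rule finite_subset[of _ "Pow {0..<n}"]) auto

lemma ksubsetsD:
  assumes "\<alpha> \<in> ksubsets n k"
  shows "finite \<alpha>" "card \<alpha> = k" "\<alpha> \<subseteq> {0..<n}"
  using assms finite_subset unfolding ksubsets_def by auto

lemma card_ksubset_below: "\<alpha> \<in> ksubsets n k \<Longrightarrow> card {i. i < n \<and> i \<in> \<alpha>} = k"
proof -
  assume \<alpha>: "\<alpha> \<in> ksubsets n k"
  then have "{i. i < n \<and> i \<in> \<alpha>} = \<alpha>" unfolding ksubsets_def by auto
  then show ?thesis using \<alpha> unfolding ksubsets_def by simp
qed

lemma initial_segment_in_ksubsets: "k \<le> n \<Longrightarrow> {0..<k} \<in> ksubsets n k"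
  unfolding ksubsets_def by auto

lemma bij_betw_pick: "finite S \<Longrightarrow> bij_betw (pick S) {0..<card S} S"
proof (rule bij_betw_imageI)
  show "inj_on (pick S) {0..<card S}"
  proof (rule inj_onI)
    fix i j assume "i \<in> {0..<card S}" "j \<in> {0..<card S}" "pick S i = pick S j"
    then show "i = j" using pick_mono_le[of i S j] pick_mono_le[of j S i] by (cases i j rule: linorder_cases) auto
  qed
  assume S: "finite S"
  show "pick S ` {0..<card S} = S"
  proof
    show "pick S ` {0..<card S} \<subseteq> S" using pick_in_set_le by auto
    show "S \<subseteq> pick S ` {0..<card S}"
    proof
      fix x assume x: "x \<in> S"
      have "card {a\<in>S. a < x} < card S"
        using x by (intro psubset_card_mono[OF S]) auto
      then show "x \<in> pick S ` {0..<card S}"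
        using pick_card_in_set[OF x] by (intro image_eqI[of _ _ "card {a\<in>S. a < x}"]) auto
    qed
  qed
qed

lemma pick_ksubset:
  assumes "\<alpha> \<in> ksubsets n k" "j < k"
  shows "pick \<alpha> j \<in> \<alpha>" "pick \<alpha> j < n"
  using pick_in_set_le[of j \<alpha>] ksubsetsD[OF assms(1)] assms(2) by auto

lemma submatrix_rows_carrier:
  assumes A: "A \<in> carrier_mat n m" and \<alpha>: "\<alpha> \<in> ksubsets n k"
  shows "submatrix A \<alpha> UNIV \<in> carrier_mat k m"
proof -
  have "dim_row A = n" "dim_col A = m" using A by auto
  then show ?thesis using card_ksubset_below[OF \<alpha>] unfolding carrier_mat_def by (simp add: dim_submatrix)
qed

lemma submatrix_cols_carrier:
  assumes A: "A \<in> carrier_mat m n" and \<beta>: "\<beta> \<in> ksubsets n k"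
  shows "submatrix A UNIV \<beta> \<in> carrier_mat m k"
proof -
  have "dim_row A = m" "dim_col A = n" using A by auto
  then show ?thesis using card_ksubset_below[OF \<beta>] unfolding carrier_mat_def by (simp add: dim_submatrix)
qed

lemma submatrix_square_carrier:
  assumes A: "A \<in> carrier_mat n n" and \<alpha>: "\<alpha> \<in> ksubsets n k" and \<beta>: "\<beta> \<in> ksubsets n k"
  shows "submatrix A \<alpha> \<beta> \<in> carrier_mat k k"
proof -
  have "dim_row A = n" "dim_col A = n" using A by auto
  then show ?thesis using card_ksubset_below[OF \<alpha>] card_ksubset_below[OF \<beta>]
    unfolding carrier_mat_def by (simp add: dim_submatrix)
qed

lemma submatrix_square_index:
  assumes A: "A \<in> carrier_mat n n" and \<alpha>: "\<alpha> \<in> ksubsets n k" and \<beta>: "\<beta> \<in> ksubsets n k"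
    and "i < k" "j < k"
  shows "submatrix A \<alpha> \<beta> $$ (i, j) = A $$ (pick \<alpha> i, pick \<beta> j)"
proof -
  have "dim_row A = n" "dim_col A = n" using A by auto
  then show ?thesis using assms(4,5) card_ksubset_below[OF \<alpha>] card_ksubset_below[OF \<beta>]
    by (intro submatrix_index) simp_all
qed

lemma submatrix_split_rows: "submatrix A I J = submatrix (submatrix A I UNIV) UNIV J"
proof (rule eq_matI)
  fix i j assume i: "i < dim_row (submatrix (submatrix A I UNIV) UNIV J)"
    and j: "j < dim_col (submatrix (submatrix A I UNIV) UNIV J)"
  then have i': "i < card {i. i < dim_row A \<and> i \<in> I}" and j': "j < card {j. j < dim_col A \<and> j \<in> J}"
    by (simp_all add: dim_submatrix)
  have "submatrix (submatrix A I UNIV) UNIV J $$ (i, j) = submatrix A I UNIV $$ (pick UNIV i, pick J j)"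
    by (rule submatrix_index) (use i' j' in \<open>simp_all add: dim_submatrix\<close>)
  also have "\<dots> = A $$ (pick I i, pick J j)"
    using submatrix_index[of i A I "pick J j" UNIV] i' pick_le[OF j'] by (simp add: pick_UNIV)
  also have "\<dots> = submatrix A I J $$ (i, j)"
    by (rule submatrix_index[symmetric]) (use i' j' in simp_all)
  finally show "submatrix A I J $$ (i, j) = submatrix (submatrix A I UNIV) UNIV J $$ (i, j)"
    by simp
qed (simp_all add: dim_submatrix)

lemma submatrix_mult_rows:
  assumes A: "A \<in> carrier_mat n m" and B: "B \<in> carrier_mat m p"
  shows "submatrix (A * B) I UNIV = submatrix A I UNIV * B"
proof (rule eq_matI)
  fix i j assume i: "i < dim_row (submatrix A I UNIV * B)" and j: "j < dim_col (submatrix A I UNIV * B)"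
  then have i': "i < card {i. i < n \<and> i \<in> I}" and j': "j < p"
    using A B by (simp_all add: dim_submatrix)
  have pi: "pick I i < n" using pick_le[OF i'] .
  have row_eq: "row (submatrix A I UNIV) i = row A (pick I i)"
    using A i' pi by (intro eq_vecI) (simp_all add: submatrix_index dim_submatrix pick_UNIV)
  have "submatrix (A * B) I UNIV $$ (i, j) = (A * B) $$ (pick I i, pick UNIV j)"
    by (rule submatrix_index) (use A B i' j' in auto)
  also have "\<dots> = row A (pick I i) \<bullet> col B j"
    using A B pi j' by (simp add: pick_UNIV)
  also have "\<dots> = (submatrix A I UNIV * B) $$ (i, j)"
    using i j by (simp add: row_eq)
  finally show "submatrix (A * B) I UNIV $$ (i, j) = (submatrix A I UNIV * B) $$ (i, j)" .
next
  show "dim_row (submatrix (A * B) I UNIV) = dim_row (submatrix A I UNIV * B)"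
    by (simp add: dim_submatrix)
  show "dim_col (submatrix (A * B) I UNIV) = dim_col (submatrix A I UNIV * B)"
    by (simp add: dim_submatrix)
qed

section \<open>The Cauchy--Binet formula\<close>

definition pick_permuted :: "nat \<Rightarrow> nat set \<Rightarrow> (nat \<Rightarrow> nat) \<Rightarrow> nat \<Rightarrow> nat" where
  "pick_permuted k \<beta> \<sigma> i = (if i < k then pick \<beta> (\<sigma> i) else i)"

definition rank_perm :: "nat \<Rightarrow> (nat \<Rightarrow> nat) \<Rightarrow> nat \<Rightarrow> nat" where
  "rank_perm k f i = (if i < k then card {a \<in> f ` {0..<k}. a < f i} else i)"

lemma pick_permuted_ksubset:
  assumes \<beta>: "\<beta> \<in> ksubsets n k" and \<sigma>: "\<sigma> permutes {0..<k}"
  shows "inj_on (pick_permuted k \<beta> \<sigma>) {0..<k}" "pick_permuted k \<beta> \<sigma> ` {0..<k} = \<beta>"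
    "rank_perm k (pick_permuted k \<beta> \<sigma>) = \<sigma>"
proof -
  have pick: "bij_betw (pick \<beta>) {0..<k} \<beta>"
    using bij_betw_pick[OF ksubsetsD(1)[OF \<beta>]] ksubsetsD(2)[OF \<beta>] by simp
  have "bij_betw (pick \<beta> \<circ> \<sigma>) {0..<k} \<beta>"
    using bij_betw_trans[OF permutes_imp_bij[OF \<sigma>] pick] .
  moreover have "pick_permuted k \<beta> \<sigma> i = (pick \<beta> \<circ> \<sigma>) i" if "i \<in> {0..<k}" for i
    using that by (simp add: pick_permuted_def)
  ultimately have bij: "bij_betw (pick_permuted k \<beta> \<sigma>) {0..<k} \<beta>"
    using bij_betw_cong by blast
  then show "inj_on (pick_permuted k \<beta> \<sigma>) {0..<k}" "pick_permuted k \<beta> \<sigma> ` {0..<k} = \<beta>"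
    by (simp_all add: bij_betw_def)
  have "card {x \<in> \<beta>. x < pick \<beta> (\<sigma> i)} = \<sigma> i" if "i < k" for i
    using card_pick_le[of "\<sigma> i" \<beta>] permutes_in_image[OF \<sigma>, of i] that ksubsetsD(2)[OF \<beta>] by simp
  then show "rank_perm k (pick_permuted k \<beta> \<sigma>) = \<sigma>"
    using permutes_not_in[OF \<sigma>] bij unfolding bij_betw_def
    by (auto simp: fun_eq_iff rank_perm_def pick_permuted_def)
qed

lemma rank_perm_injective:
  assumes inj: "inj_on f {0..<k}" and id: "\<And>i. k \<le> i \<Longrightarrow> f i = i"
  shows "rank_perm k f permutes {0..<k}" "pick_permuted k (f ` {0..<k}) (rank_perm k f) = f"
proof -
  let ?\<beta> = "f ` {0..<k}"
  have card: "card ?\<beta> = k" using card_image[OF inj] by simp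
  have rank_lt: "card {a \<in> ?\<beta>. a < f i} < k" if "i < k" for i
    using that card by (intro psubset_card_mono[of ?\<beta>, THEN order.strict_trans2]) auto
  have pick_rank: "pick ?\<beta> (card {a \<in> ?\<beta>. a < f i}) = f i" if "i < k" for i
    using that by (intro pick_card_in_set) auto
  show "pick_permuted k ?\<beta> (rank_perm k f) = f"
    using pick_rank id by (auto simp: fun_eq_iff pick_permuted_def rank_perm_def not_less)
  show "rank_perm k f permutes {0..<k}"
  proof (rule inj_on_nat_permutes)
    show "inj_on (rank_perm k f) {0..<k}"
    proof (rule inj_onI)
      fix x y assume x: "x \<in> {0..<k}" and y: "y \<in> {0..<k}" and "rank_perm k f x = rank_perm k f y"
      then have "card {a \<in> ?\<beta>. a < f x} = card {a \<in> ?\<beta>. a < f y}" by (simp add: rank_perm_def)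
      then have "f x = f y" using pick_rank x y by (metis atLeastLessThan_iff)
      then show "x = y" using inj_onD[OF inj _ x y] by simp
    qed
  qed (use rank_lt in \<open>auto simp: rank_perm_def\<close>)
qed

lemma sum_injective_functions_ksubsets:
  "sum g {f. ((\<forall>i\<in>{0..<k}. f i \<in> {0..<n}) \<and> (\<forall>i. i \<notin> {0..<k} \<longrightarrow> f i = i)) \<and> inj_on f {0..<k}} =
    (\<Sum>\<beta>\<in>ksubsets n k. \<Sum>\<sigma> | \<sigma> permutes {0..<k}. g (pick_permuted k \<beta> \<sigma>))"
    (is "sum g ?T = _")
proof -
  have "(\<Sum>(\<beta>, \<sigma>) \<in> ksubsets n k \<times> {\<sigma>. \<sigma> permutes {0..<k}}. g (pick_permuted k \<beta> \<sigma>)) = sum g ?T"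
  proof (rule sum.reindex_bij_witness[where i = "\<lambda>f. (f ` {0..<k}, rank_perm k f)"
        and j = "\<lambda>(\<beta>, \<sigma>). pick_permuted k \<beta> \<sigma>"])
    fix a assume "a \<in> ksubsets n k \<times> {\<sigma>. \<sigma> permutes {0..<k}}"
    then obtain \<beta> \<sigma> where a: "a = (\<beta>, \<sigma>)" and \<beta>: "\<beta> \<in> ksubsets n k" and \<sigma>: "\<sigma> permutes {0..<k}"
      by auto
    note pick = pick_permuted_ksubset[OF \<beta> \<sigma>]
    show "(\<lambda>f. (f ` {0..<k}, rank_perm k f)) ((\<lambda>(\<beta>, \<sigma>). pick_permuted k \<beta> \<sigma>) a) = a"
      unfolding a using pick(2,3) by simp
    have "pick_permuted k \<beta> \<sigma> ` {0..<k} \<subseteq> {0..<n}" using pick(2) ksubsetsD(3)[OF \<beta>] by simp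
    then have "\<forall>i\<in>{0..<k}. pick_permuted k \<beta> \<sigma> i \<in> {0..<n}" by (simp add: image_subset_iff)
    moreover have "\<forall>i. i \<notin> {0..<k} \<longrightarrow> pick_permuted k \<beta> \<sigma> i = i" by (simp add: pick_permuted_def)
    ultimately show "(\<lambda>(\<beta>, \<sigma>). pick_permuted k \<beta> \<sigma>) a \<in> ?T"
      using pick(1) a by simp
  next
    fix f assume f: "f \<in> ?T"
    then have inj: "inj_on f {0..<k}" and id: "\<And>i. k \<le> i \<Longrightarrow> f i = i" by auto
    note rank = rank_perm_injective[OF inj id]
    show "(\<lambda>(\<beta>, \<sigma>). pick_permuted k \<beta> \<sigma>) ((\<lambda>f. (f ` {0..<k}, rank_perm k f)) f) = f"
      using rank(2) by simp
    have "f ` {0..<k} \<in> ksubsets n k" using f card_image[OF inj] unfolding ksubsets_def by auto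
    then show "(\<lambda>f. (f ` {0..<k}, rank_perm k f)) f \<in> ksubsets n k \<times> {\<sigma>. \<sigma> permutes {0..<k}}"
      using rank(1) by simp
  qed (simp add: case_prod_beta)
  then show ?thesis unfolding sum.cartesian_product by simp
qed

lemma det_rows_permuted_ksubset:
  assumes Y: "Y \<in> carrier_mat n k" and \<beta>: "\<beta> \<in> ksubsets n k" and \<sigma>: "\<sigma> permutes {0..<k}"
  shows "det (mat\<^sub>r k k (\<lambda>i. row Y (pick \<beta> (\<sigma> i)))) = signof \<sigma> * det (submatrix Y \<beta> UNIV)"
proof -
  have "mat\<^sub>r k k (\<lambda>i. row Y (pick \<beta> (\<sigma> i))) = mat k k (\<lambda>(i, j). submatrix Y \<beta> UNIV $$ (\<sigma> i, j))"
  proof (rule eq_matI)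
    fix i j assume "i < dim_row (mat k k (\<lambda>(i, j). submatrix Y \<beta> UNIV $$ (\<sigma> i, j)))"
      and "j < dim_col (mat k k (\<lambda>(i, j). submatrix Y \<beta> UNIV $$ (\<sigma> i, j)))"
    then have ij: "i < k" "j < k" by auto
    then have \<sigma>i: "\<sigma> i < k" using permutes_in_image[OF \<sigma>] by auto
    have "submatrix Y \<beta> UNIV $$ (\<sigma> i, j) = Y $$ (pick \<beta> (\<sigma> i), pick UNIV j)"
      using Y \<sigma>i ij card_ksubset_below[OF \<beta>] by (intro submatrix_index) auto
    then show "mat\<^sub>r k k (\<lambda>i. row Y (pick \<beta> (\<sigma> i))) $$ (i, j) =
        mat k k (\<lambda>(i, j). submatrix Y \<beta> UNIV $$ (\<sigma> i, j)) $$ (i, j)"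
      using Y ij pick_ksubset(2)[OF \<beta> \<sigma>i] by (simp add: pick_UNIV)
  qed auto
  then show ?thesis
    using det_permute_rows[OF submatrix_rows_carrier[OF Y \<beta>] \<sigma>] by simp
qed

lemma sum_permutes_pick_permuted:
  fixes X Y :: "'a::comm_ring_1 mat"
  assumes X: "X \<in> carrier_mat k n" and Y: "Y \<in> carrier_mat n k" and \<beta>: "\<beta> \<in> ksubsets n k"
  shows "(\<Sum>\<sigma> | \<sigma> permutes {0..<k}. (\<Prod>i\<in>{0..<k}. X $$ (i, pick_permuted k \<beta> \<sigma> i)) *
           det (mat\<^sub>r k k (\<lambda>i. row Y (pick_permuted k \<beta> \<sigma> i)))) =
         det (submatrix X UNIV \<beta>) * det (submatrix Y \<beta> UNIV)"
proof -
  have "(\<Prod>i\<in>{0..<k}. X $$ (i, pick_permuted k \<beta> \<sigma> i)) * det (mat\<^sub>r k k (\<lambda>i. row Y (pick_permuted k \<beta> \<sigma> i))) =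
      signof \<sigma> * (\<Prod>i\<in>{0..<k}. submatrix X UNIV \<beta> $$ (i, \<sigma> i)) * det (submatrix Y \<beta> UNIV)"
    if \<sigma>: "\<sigma> permutes {0..<k}" for \<sigma>
  proof -
    have \<sigma>_lt: "\<sigma> i < k" if "i < k" for i using permutes_in_image[OF \<sigma>] that by auto
    have "mat\<^sub>r k k (\<lambda>i. row Y (pick_permuted k \<beta> \<sigma> i)) = mat\<^sub>r k k (\<lambda>i. row Y (pick \<beta> (\<sigma> i)))"
      by (rule eq_matI) (auto simp: pick_permuted_def)
    moreover have "(\<Prod>i\<in>{0..<k}. X $$ (i, pick_permuted k \<beta> \<sigma> i)) =
        (\<Prod>i\<in>{0..<k}. submatrix X UNIV \<beta> $$ (i, \<sigma> i))"
      using X \<sigma>_lt card_ksubset_below[OF \<beta>]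
      by (intro prod.cong) (auto simp: submatrix_index pick_UNIV pick_permuted_def)
    ultimately show ?thesis using det_rows_permuted_ksubset[OF Y \<beta> \<sigma>] by simp
  qed
  then have "(\<Sum>\<sigma> | \<sigma> permutes {0..<k}. (\<Prod>i\<in>{0..<k}. X $$ (i, pick_permuted k \<beta> \<sigma> i)) *
           det (mat\<^sub>r k k (\<lambda>i. row Y (pick_permuted k \<beta> \<sigma> i)))) =
      (\<Sum>\<sigma> | \<sigma> permutes {0..<k}. signof \<sigma> * (\<Prod>i\<in>{0..<k}. submatrix X UNIV \<beta> $$ (i, \<sigma> i))) *
        det (submatrix Y \<beta> UNIV)"
    unfolding sum_distrib_right by (intro sum.cong) auto
  also have "\<dots> = det (submatrix X UNIV \<beta>) * det (submatrix Y \<beta> UNIV)"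
    unfolding det_def'[OF submatrix_cols_carrier[OF X \<beta>]] ..
  finally show ?thesis .
qed

lemma cauchy_binet:
  fixes X Y :: "'a::comm_ring_1 mat"
  assumes X: "X \<in> carrier_mat k n" and Y: "Y \<in> carrier_mat n k"
  shows "det (X * Y) = (\<Sum>\<beta>\<in>ksubsets n k. det (submatrix X UNIV \<beta>) * det (submatrix Y \<beta> UNIV))"
proof -
  let ?U = "{0..<k}"
  let ?F = "{f. (\<forall>i\<in>?U. f i \<in> {0..<n}) \<and> (\<forall>i. i \<notin> ?U \<longrightarrow> f i = i)}"
  let ?h = "\<lambda>f. prod (\<lambda>i. X $$ (i, f i)) ?U * det (mat\<^sub>r k k (\<lambda>i. row Y (f i)))"
  have "det (X * Y) = (\<Sum>f\<in>?F. det (mat\<^sub>r k k (\<lambda>i. X $$ (i, f i) \<cdot>\<^sub>v row Y (f i))))"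
    unfolding mat_mul_finsum_alt[OF X Y] by (rule det_linear_rows_sum) (use Y in auto)
  also have "\<dots> = sum ?h ?F"
    by (intro sum.cong refl det_rows_mul) (use Y in auto)
  also have "\<dots> = sum ?h {f. f \<in> ?F \<and> inj_on f ?U}"
  proof (rule sum.mono_neutral_right)
    show "finite ?F" by (rule finite_bounded_functions) auto
    show "\<forall>f\<in>?F - {f. f \<in> ?F \<and> inj_on f ?U}. ?h f = 0"
    proof
      fix f assume "f \<in> ?F - {f. f \<in> ?F \<and> inj_on f ?U}"
      then have "\<not> inj_on f ?U" by blast
      then obtain i j where ij: "f i = f j" "i \<noteq> j" "i < k" "j < k" unfolding inj_on_def by auto
      have "det (mat\<^sub>r k k (\<lambda>i. row Y (f i))) = 0"
        by (rule det_identical_rows[OF _ ij(2-4)]) (use ij Y in \<open>auto simp: row_mat_of_row_fun\<close>)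
      then show "?h f = 0" by simp
    qed
  qed auto
  also have "\<dots> = (\<Sum>\<beta>\<in>ksubsets n k. \<Sum>\<sigma> | \<sigma> permutes ?U. ?h (pick_permuted k \<beta> \<sigma>))"
    using sum_injective_functions_ksubsets[of ?h k n] by simp
  also have "\<dots> = (\<Sum>\<beta>\<in>ksubsets n k. det (submatrix X UNIV \<beta>) * det (submatrix Y \<beta> UNIV))"
    using sum_permutes_pick_permuted[OF X Y] by simp
  finally show ?thesis .
qed

section \<open>An eigenvector of the compound matrix\<close>

definition maximal_minors :: "'a::comm_ring_1 mat \<Rightarrow> nat set \<Rightarrow> 'a" where
  "maximal_minors W \<alpha> =
     (if \<alpha> \<in> ksubsets (dim_row W) (dim_col W) then det (submatrix W \<alpha> UNIV) else 0)"

lemma maximal_minors_in_cvecs: "W \<in> carrier_mat n k \<Longrightarrow> maximal_minors W \<in> cvecs n k"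
  unfolding maximal_minors_def cvecs_def by auto

lemma maximal_minors_mult_right:
  assumes W: "W \<in> carrier_mat n k" and T: "T \<in> carrier_mat k k"
  shows "maximal_minors (W * T) = (\<lambda>\<alpha>. det T * maximal_minors W \<alpha>)"
proof
  fix \<alpha>
  show "maximal_minors (W * T) \<alpha> = det T * maximal_minors W \<alpha>"
  proof (cases "\<alpha> \<in> ksubsets n k")
    case True
    have "det (submatrix (W * T) \<alpha> UNIV) = det (submatrix W \<alpha> UNIV) * det T"
      unfolding submatrix_mult_rows[OF W T] using submatrix_rows_carrier[OF W True] T by (rule det_mult)
    then show ?thesis using True W T by (simp add: maximal_minors_def)
  qed (use W T in \<open>simp add: maximal_minors_def\<close>)
qed

lemma maximal_minors_nonzero:
  assumes W: "W \<in> carrier_mat n k" and V: "V \<in> carrier_mat k n" and VW: "V * W = 1\<^sub>m k"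
  shows "maximal_minors W \<noteq> (\<lambda>_. 0)"
proof
  assume zero: "maximal_minors W = (\<lambda>_. 0)"
  have "det (submatrix W \<beta> UNIV) = maximal_minors W \<beta>" if "\<beta> \<in> ksubsets n k" for \<beta>
    using that W by (simp add: maximal_minors_def)
  then have "det (submatrix W \<beta> UNIV) = 0" if "\<beta> \<in> ksubsets n k" for \<beta>
    using that zero by simp
  then have "det (V * W) = 0" unfolding cauchy_binet[OF V W] by simp
  then show False using VW by simp
qed

lemma cmat_apply_compound_maximal_minors:
  assumes A: "A \<in> carrier_mat n n" and W: "W \<in> carrier_mat n k"
  shows "cmat_apply n k (compound k A) (maximal_minors W) = maximal_minors (A * W)"
proof
  fix \<alpha>
  show "cmat_apply n k (compound k A) (maximal_minors W) \<alpha> = maximal_minors (A * W) \<alpha>"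
  proof (cases "\<alpha> \<in> ksubsets n k")
    case \<alpha>: True
    have A\<alpha>: "submatrix A \<alpha> UNIV \<in> carrier_mat k n" by (rule submatrix_rows_carrier[OF A \<alpha>])
    have dims: "dim_row A = n" "dim_row W = n" "dim_col W = k" using A W by auto
    have "cmat_apply n k (compound k A) (maximal_minors W) \<alpha> =
        (\<Sum>\<beta>\<in>ksubsets n k. det (submatrix (submatrix A \<alpha> UNIV) UNIV \<beta>) * det (submatrix W \<beta> UNIV))"
      using \<alpha> unfolding cmat_apply_def compound_def maximal_minors_def submatrix_split_rows[symmetric] dims
      by simp
    also have "\<dots> = det (submatrix A \<alpha> UNIV * W)" by (rule cauchy_binet[OF A\<alpha> W, symmetric])
    also have "\<dots> = maximal_minors (A * W) \<alpha>"
      using \<alpha> A W by (simp add: maximal_minors_def submatrix_mult_rows)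
    finally show ?thesis .
  qed (use A W in \<open>simp add: cmat_apply_def maximal_minors_def\<close>)
qed

lemma leading_rows_mult_leading_cols:
  assumes P: "P \<in> carrier_mat n n" and Q: "Q \<in> carrier_mat n n" and QP: "Q * P = 1\<^sub>m n" and kn: "k \<le> n"
  shows "mat k n (\<lambda>(i, j). Q $$ (i, j)) * mat n k (\<lambda>(i, j). P $$ (i, j)) = 1\<^sub>m k"
proof (rule eq_matI)
  fix i j assume "i < dim_row (1\<^sub>m k)" "j < dim_col (1\<^sub>m k)"
  then have ij: "i < k" "j < k" by auto
  have "row (mat k n (\<lambda>(i, j). Q $$ (i, j))) i = row Q i" "col (mat n k (\<lambda>(i, j). P $$ (i, j))) j = col P j"
    using ij kn P Q by (auto intro!: eq_vecI)
  then have "(mat k n (\<lambda>(i, j). Q $$ (i, j)) * mat n k (\<lambda>(i, j). P $$ (i, j))) $$ (i, j) = (Q * P) $$ (i, j)"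
    using ij kn P Q by simp
  then show "(mat k n (\<lambda>(i, j). Q $$ (i, j)) * mat n k (\<lambda>(i, j). P $$ (i, j))) $$ (i, j) = 1\<^sub>m k $$ (i, j)"
    using ij kn QP by simp
qed auto

lemma mult_leading_cols_upper_triangular:
  assumes A: "A \<in> carrier_mat n n" and P: "P \<in> carrier_mat n n" and S: "S \<in> carrier_mat n n"
    and AP: "A * P = P * S" and ut: "upper_triangular S" and kn: "k \<le> n"
  shows "A * mat n k (\<lambda>(i, j). P $$ (i, j)) = mat n k (\<lambda>(i, j). P $$ (i, j)) * mat k k (\<lambda>(i, j). S $$ (i, j))"
    (is "A * ?W = ?W * ?T")
proof (rule eq_matI)
  fix i j assume "i < dim_row (?W * ?T)" "j < dim_col (?W * ?T)"
  then have ij: "i < n" "j < k" by auto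
  have "col ?W j = col P j" using ij kn P by (auto intro!: eq_vecI)
  then have "(A * ?W) $$ (i, j) = (P * S) $$ (i, j)"
    using ij kn A P by (simp flip: AP)
  also have "\<dots> = (\<Sum>l\<in>{0..<n}. P $$ (i, l) * S $$ (l, j))"
    using ij kn P S by (simp add: scalar_prod_def)
  also have "\<dots> = (\<Sum>l\<in>{0..<k}. P $$ (i, l) * S $$ (l, j))"
    using ij ut S kn by (intro sum.mono_neutral_right) (auto simp: upper_triangular_def)
  also have "\<dots> = (?W * ?T) $$ (i, j)"
    using ij kn by (simp add: scalar_prod_def)
  finally show "(A * ?W) $$ (i, j) = (?W * ?T) $$ (i, j)" .
qed (use A in auto)

lemma det_leading_block_upper_triangular:
  assumes S: "S \<in> carrier_mat n n" and ut: "upper_triangular S" and kn: "k \<le> n"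
  shows "det (mat k k (\<lambda>(i, j). S $$ (i, j))) = (\<Prod>i<k. S $$ (i, i))"
proof -
  have "upper_triangular (mat k k (\<lambda>(i, j). S $$ (i, j)))"
    using ut S kn unfolding upper_triangular_def by auto
  then show ?thesis
    by (simp add: det_upper_triangular[of _ k] prod_list_diag_prod lessThan_atLeast0)
qed

lemma prod_list_map_conv_prod_nth: "(\<Prod>x\<leftarrow>xs. f x) = (\<Prod>i<length xs. f (xs ! i))"
  by (induction xs) (simp_all add: prod.lessThan_Suc_shift del: prod.lessThan_Suc)

lemma leading_invariant_subspace:
  fixes A :: "complex mat"
  assumes A: "A \<in> carrier_mat n n" and kn: "k \<le> n" and len: "length es = n"
    and cp: "char_poly A = (\<Prod>i<n. [:- (es ! i), 1:])"
  obtains W V T where "W \<in> carrier_mat n k" "V \<in> carrier_mat k n" "T \<in> carrier_mat k k"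
    "V * W = 1\<^sub>m k" "A * W = W * T" "det T = (\<Prod>i<k. es ! i)"
proof -
  have "char_poly A = (\<Prod>e\<leftarrow>es. [:- e, 1:])" unfolding cp prod_list_map_conv_prod_nth len ..
  moreover obtain S P Q where "schur_decomposition A es = (S, P, Q)"
    by (cases "schur_decomposition A es") auto
  ultimately have sim: "similar_mat_wit A S P Q" and ut: "upper_triangular S" and diag: "diag_mat S = es"
    using schur_decomposition[OF A] by auto
  note simD = similar_mat_witD2[OF A sim]
  have S: "S \<in> carrier_mat n n" and P: "P \<in> carrier_mat n n" and Q: "Q \<in> carrier_mat n n"
    using simD by auto
  have "A * P = P * S * (Q * P)" unfolding simD(3)
    by (rule assoc_mult_mat[of "P * S" n n Q n P n]) (use P S Q in auto)
  then have AP: "A * P = P * S" using P S unfolding simD(2) by simp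
  have "(\<Prod>i<k. S $$ (i, i)) = (\<Prod>i<k. es ! i)"
    unfolding diag[symmetric] diag_mat_def using S kn by (intro prod.cong) auto
  then show thesis
    using that[OF _ _ _ leading_rows_mult_leading_cols[OF P Q simD(2) kn]
        mult_leading_cols_upper_triangular[OF A P S AP ut kn]]
      det_leading_block_upper_triangular[OF S ut kn] by auto
qed

lemma compound_eigenvector:
  fixes A :: "complex mat"
  assumes A: "A \<in> carrier_mat n n" and kn: "k \<le> n" and len: "length es = n"
    and cp: "char_poly A = (\<Prod>i<n. [:- (es ! i), 1:])"
  obtains x where "x \<in> cvecs n k" "x \<noteq> (\<lambda>_. 0)"
    "cmat_apply n k (compound k A) x = (\<lambda>\<alpha>. (\<Prod>i<k. es ! i) * x \<alpha>)"
proof -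
  obtain W V T where W: "W \<in> carrier_mat n k" and V: "V \<in> carrier_mat k n" and T: "T \<in> carrier_mat k k"
    and VW: "V * W = 1\<^sub>m k" and AW: "A * W = W * T" and det: "det T = (\<Prod>i<k. es ! i)"
    using leading_invariant_subspace[OF A kn len cp] .
  show thesis
  proof (rule that)
    show "maximal_minors W \<in> cvecs n k" by (rule maximal_minors_in_cvecs[OF W])
    show "maximal_minors W \<noteq> (\<lambda>_. 0)" by (rule maximal_minors_nonzero[OF W V VW])
    show "cmat_apply n k (compound k A) (maximal_minors W) = (\<lambda>\<alpha>. (\<Prod>i<k. es ! i) * maximal_minors W \<alpha>)"
      unfolding cmat_apply_compound_maximal_minors[OF A W] AW maximal_minors_mult_right[OF W T] det ..
  qed
qed

section \<open>Absolute norms on the compound space\<close>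

lemma cvecsI: "(\<And>\<alpha>. \<alpha> \<notin> ksubsets n k \<Longrightarrow> x \<alpha> = 0) \<Longrightarrow> x \<in> cvecs n k"
  unfolding cvecs_def by auto

lemma cvecsD: "x \<in> cvecs n k \<Longrightarrow> \<alpha> \<notin> ksubsets n k \<Longrightarrow> x \<alpha> = 0"
  unfolding cvecs_def by auto

lemma cmat_apply_in_cvecs: "cmat_apply n k M x \<in> cvecs n k"
  unfolding cmat_apply_def cvecs_def by auto

lemma indicator_in_cvecs:
  assumes "\<alpha> \<in> ksubsets n k"
  shows "(indicator {\<alpha>} :: nat set \<Rightarrow> complex) \<in> cvecs n k - {\<lambda>_. 0}"
proof -
  have "indicator {\<alpha>} \<in> cvecs n k" using assms by (intro cvecsI) (auto simp: indicator_def)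
  moreover have "(indicator {\<alpha>} :: nat set \<Rightarrow> complex) \<noteq> (\<lambda>_. 0)"
  proof
    assume "(indicator {\<alpha>} :: nat set \<Rightarrow> complex) = (\<lambda>_. 0)"
    then have "indicator {\<alpha>} \<alpha> = (0 :: complex)" by (rule fun_cong)
    then show False by simp
  qed
  ultimately show ?thesis by blast
qed

context
  fixes n k :: nat and \<eta> :: "(nat set \<Rightarrow> complex) \<Rightarrow> real"
  assumes \<eta>: "abs_vec_norm_on n k \<eta>"
begin

lemma abs_norm_nonneg: "x \<in> cvecs n k \<Longrightarrow> 0 \<le> \<eta> x"
  using \<eta> unfolding abs_vec_norm_on_def by blast

lemma abs_norm_eq_0_iff: "x \<in> cvecs n k \<Longrightarrow> \<eta> x = 0 \<longleftrightarrow> x = (\<lambda>_. 0)"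
  using \<eta> unfolding abs_vec_norm_on_def by blast

lemma abs_norm_pos: "x \<in> cvecs n k \<Longrightarrow> x \<noteq> (\<lambda>_. 0) \<Longrightarrow> 0 < \<eta> x"
  using abs_norm_nonneg abs_norm_eq_0_iff by force

lemma abs_norm_scale: "x \<in> cvecs n k \<Longrightarrow> \<eta> (\<lambda>\<alpha>. c * x \<alpha>) = cmod c * \<eta> x"
  using \<eta> unfolding abs_vec_norm_on_def by blast

lemma abs_norm_triangle:
  "x \<in> cvecs n k \<Longrightarrow> y \<in> cvecs n k \<Longrightarrow> \<eta> (\<lambda>\<alpha>. x \<alpha> + y \<alpha>) \<le> \<eta> x + \<eta> y"
  using \<eta> unfolding abs_vec_norm_on_def by blast

lemma abs_norm_cong:
  "x \<in> cvecs n k \<Longrightarrow> y \<in> cvecs n k \<Longrightarrow> (\<And>\<alpha>. cmod (x \<alpha>) = cmod (y \<alpha>)) \<Longrightarrow> \<eta> x = \<eta> y"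
  using \<eta> unfolding abs_vec_norm_on_def by blast

lemma abs_norm_update_le:
  assumes x: "x \<in> cvecs n k" and c: "cmod c \<le> cmod (x \<beta>)"
  shows "\<eta> (x(\<beta> := c)) \<le> \<eta> x"
proof (cases "x \<beta> = 0")
  case True
  then show ?thesis using c by (simp add: fun_upd_idem)
next
  case False
  then have \<beta>: "\<beta> \<in> ksubsets n k" using cvecsD[OF x] by blast
  define s where "s = cmod c / cmod (x \<beta>)"
  have s: "0 \<le> s" "s \<le> 1" "s * cmod (x \<beta>) = cmod c" using c False by (auto simp: s_def)
  \<comment> \<open>\<open>x(\<beta> := c)\<close> has the moduli of a convex combination of \<open>x\<close> and \<open>x\<close> reflected at \<open>\<beta>\<close>\<close>
  define a b where "a = complex_of_real ((1 + s) / 2)" and "b = complex_of_real ((1 - s) / 2)"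
  let ?y = "x(\<beta> := - x \<beta>)"
  have y: "?y \<in> cvecs n k" using x \<beta> by (auto intro!: cvecsI dest: cvecsD)
  have scaled_x: "(\<lambda>\<alpha>. a * x \<alpha>) \<in> cvecs n k" and scaled_y: "(\<lambda>\<alpha>. b * ?y \<alpha>) \<in> cvecs n k"
    using x y by (auto intro!: cvecsI dest: cvecsD)
  have "\<eta> (x(\<beta> := c)) = \<eta> (\<lambda>\<alpha>. a * x \<alpha> + b * ?y \<alpha>)"
  proof (rule abs_norm_cong)
    show "x(\<beta> := c) \<in> cvecs n k" "(\<lambda>\<alpha>. a * x \<alpha> + b * ?y \<alpha>) \<in> cvecs n k"
      using x \<beta> by (auto intro!: cvecsI dest: cvecsD)
    have ab: "a - b = complex_of_real s" "a + b = 1"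
      unfolding a_def b_def by (simp_all flip: of_real_diff of_real_add add: field_simps)
    have "a * x \<beta> + b * - x \<beta> = (a - b) * x \<beta>" "a * x \<alpha> + b * x \<alpha> = (a + b) * x \<alpha>" for \<alpha>
      by (simp_all add: algebra_simps)
    then have "a * x \<beta> + b * - x \<beta> = complex_of_real s * x \<beta>" "a * x \<alpha> + b * x \<alpha> = x \<alpha>" for \<alpha>
      unfolding ab by simp_all
    then show "cmod ((x(\<beta> := c)) \<alpha>) = cmod (a * x \<alpha> + b * ?y \<alpha>)" for \<alpha>
      using s by (simp add: norm_mult)
  qed
  also have "\<dots> \<le> \<eta> (\<lambda>\<alpha>. a * x \<alpha>) + \<eta> (\<lambda>\<alpha>. b * ?y \<alpha>)"
    using abs_norm_triangle[OF scaled_x scaled_y] by simp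
  also have "\<dots> = (1 + s) / 2 * \<eta> x + (1 - s) / 2 * \<eta> ?y"
    using s unfolding abs_norm_scale[OF x] abs_norm_scale[OF y] a_def b_def norm_of_real by simp
  also have "\<eta> ?y = \<eta> x" by (rule abs_norm_cong[OF y x]) simp
  also have "(1 + s) / 2 * \<eta> x + (1 - s) / 2 * \<eta> x = \<eta> x" by (simp add: field_simps)
  finally show ?thesis .
qed

lemma abs_norm_mono:
  assumes x: "x \<in> cvecs n k" and y: "y \<in> cvecs n k" and le: "\<And>\<alpha>. cmod (x \<alpha>) \<le> cmod (y \<alpha>)"
  shows "\<eta> x \<le> \<eta> y"
proof -
  have "\<forall>x\<in>cvecs n k. (\<forall>\<alpha>. cmod (x \<alpha>) \<le> cmod (y \<alpha>)) \<longrightarrow> (\<forall>\<alpha>. \<alpha> \<notin> D \<longrightarrow> x \<alpha> = y \<alpha>) \<longrightarrow> \<eta> x \<le> \<eta> y"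
    if "finite D" for D
    using that
  proof (induction D rule: finite_induct)
    case (insert \<beta> D)
    show ?case
    proof (intro ballI impI)
      fix x assume x: "x \<in> cvecs n k" and le: "\<forall>\<alpha>. cmod (x \<alpha>) \<le> cmod (y \<alpha>)"
        and eq: "\<forall>\<alpha>. \<alpha> \<notin> insert \<beta> D \<longrightarrow> x \<alpha> = y \<alpha>"
      let ?z = "x(\<beta> := y \<beta>)"
      have z: "?z \<in> cvecs n k" using x y by (auto intro!: cvecsI dest: cvecsD)
      have "\<eta> x = \<eta> (?z(\<beta> := x \<beta>))" by simp
      also have "\<dots> \<le> \<eta> ?z" using le by (intro abs_norm_update_le[OF z]) simp
      also have "\<dots> \<le> \<eta> y" using insert.IH z le eq by auto
      finally show "\<eta> x \<le> \<eta> y" .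
    qed
  qed (auto simp: fun_eq_iff)
  moreover have "\<forall>\<alpha>. \<alpha> \<notin> ksubsets n k \<longrightarrow> x \<alpha> = y \<alpha>" using cvecsD[OF x] cvecsD[OF y] by simp
  ultimately show ?thesis using finite_ksubsets x le by blast
qed

lemma abs_norm_le_sum_units:
  assumes x: "x \<in> cvecs n k"
  shows "\<eta> x \<le> (\<Sum>\<alpha>\<in>ksubsets n k. cmod (x \<alpha>) * \<eta> (indicator {\<alpha>}))"
proof -
  have partial: "\<eta> (\<lambda>\<gamma>. if \<gamma> \<in> S then x \<gamma> else 0) \<le> (\<Sum>\<alpha>\<in>S. cmod (x \<alpha>) * \<eta> (indicator {\<alpha>}))"
    if "finite S" "S \<subseteq> ksubsets n k" for S
    using that
  proof (induction S rule: finite_induct)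
    case empty
    have "\<eta> (\<lambda>_. 0) = 0" using abs_norm_eq_0_iff[of "\<lambda>_. 0"] by (simp add: cvecs_def)
    then show ?case by simp
  next
    case (insert \<beta> S)
    have xS: "(\<lambda>\<gamma>. if \<gamma> \<in> S then x \<gamma> else 0) \<in> cvecs n k"
      using insert.prems x by (auto intro!: cvecsI dest: cvecsD)
    have e\<beta>: "indicator {\<beta>} \<in> cvecs n k" using indicator_in_cvecs insert.prems by blast
    then have x\<beta>: "(\<lambda>\<gamma>. x \<beta> * indicator {\<beta>} \<gamma>) \<in> cvecs n k" by (auto intro!: cvecsI dest: cvecsD)
    have "(\<lambda>\<gamma>. if \<gamma> \<in> insert \<beta> S then x \<gamma> else 0) =
        (\<lambda>\<gamma>. (if \<gamma> \<in> S then x \<gamma> else 0) + x \<beta> * indicator {\<beta>} \<gamma>)"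
      using insert.hyps(2) by (auto simp: fun_eq_iff indicator_def)
    then have "\<eta> (\<lambda>\<gamma>. if \<gamma> \<in> insert \<beta> S then x \<gamma> else 0) \<le>
        \<eta> (\<lambda>\<gamma>. if \<gamma> \<in> S then x \<gamma> else 0) + cmod (x \<beta>) * \<eta> (indicator {\<beta>})"
      using abs_norm_triangle[OF xS x\<beta>] abs_norm_scale[OF e\<beta>] by simp
    also have "\<dots> \<le> (\<Sum>\<alpha>\<in>S. cmod (x \<alpha>) * \<eta> (indicator {\<alpha>})) + cmod (x \<beta>) * \<eta> (indicator {\<beta>})"
      using insert.IH insert.prems by simp
    also have "\<dots> = (\<Sum>\<alpha>\<in>insert \<beta> S. cmod (x \<alpha>) * \<eta> (indicator {\<alpha>}))"
      using insert.hyps by simp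
    finally show ?case .
  qed
  have "(\<lambda>\<gamma>. if \<gamma> \<in> ksubsets n k then x \<gamma> else 0) = x" using cvecsD[OF x] by auto
  then show ?thesis using partial[OF finite_ksubsets order_refl] by simp
qed

lemma abs_norm_unit_pos: "\<alpha> \<in> ksubsets n k \<Longrightarrow> 0 < \<eta> (indicator {\<alpha>})"
  using indicator_in_cvecs abs_norm_pos by blast

lemma abs_norm_ge_coordinate:
  assumes x: "x \<in> cvecs n k" and \<alpha>: "\<alpha> \<in> ksubsets n k"
  shows "cmod (x \<alpha>) * \<eta> (indicator {\<alpha>}) \<le> \<eta> x"
proof -
  have "cmod (x \<alpha>) * \<eta> (indicator {\<alpha>}) = \<eta> (\<lambda>\<gamma>. x \<alpha> * indicator {\<alpha>} \<gamma>)"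
    using indicator_in_cvecs[OF \<alpha>] by (intro abs_norm_scale[symmetric]) blast
  also have "\<dots> \<le> \<eta> x"
    using indicator_in_cvecs[OF \<alpha>] x by (intro abs_norm_mono) (auto intro!: cvecsI dest: cvecsD simp: indicator_def)
  finally show ?thesis .
qed

lemma abs_norm_scale_coordinates_le:
  assumes x: "x \<in> cvecs n k" and d: "\<And>\<beta>. \<beta> \<in> ksubsets n k \<Longrightarrow> 0 \<le> d \<beta> \<and> d \<beta> \<le> D"
    and D: "0 \<le> D"
  shows "\<eta> (\<lambda>\<beta>. complex_of_real (d \<beta>) * x \<beta>) \<le> D * \<eta> x"
proof -
  have "\<eta> (\<lambda>\<beta>. complex_of_real (d \<beta>) * x \<beta>) \<le> \<eta> (\<lambda>\<beta>. complex_of_real D * x \<beta>)"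
  proof (rule abs_norm_mono)
    show "(\<lambda>\<beta>. complex_of_real (d \<beta>) * x \<beta>) \<in> cvecs n k" "(\<lambda>\<beta>. complex_of_real D * x \<beta>) \<in> cvecs n k"
      using cvecsD[OF x] by (auto intro!: cvecsI)
    show "cmod (complex_of_real (d \<beta>) * x \<beta>) \<le> cmod (complex_of_real D * x \<beta>)" for \<beta>
      using d[of \<beta>] D cvecsD[OF x, of \<beta>]
      by (cases "\<beta> \<in> ksubsets n k") (auto simp: norm_mult intro: mult_right_mono)
  qed
  also have "\<dots> = D * \<eta> x" using abs_norm_scale[OF x] D by simp
  finally show ?thesis .
qed

lemma op_norm_ratio_le:
  assumes M: "\<And>\<alpha> \<beta>. \<alpha> \<in> ksubsets n k \<Longrightarrow> \<beta> \<in> ksubsets n k \<Longrightarrow> cmod (M \<alpha> \<beta>) \<le> R"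
    and x: "x \<in> cvecs n k" and x0: "x \<noteq> (\<lambda>_. 0)"
  shows "\<eta> (cmat_apply n k M x) / \<eta> x \<le>
    R * (\<Sum>\<alpha>\<in>ksubsets n k. \<Sum>\<beta>\<in>ksubsets n k. \<eta> (indicator {\<alpha>}) / \<eta> (indicator {\<beta>}))"
proof -
  let ?K = "ksubsets n k" and ?e = "\<lambda>\<alpha>. \<eta> (indicator {\<alpha>})"
  have x_pos: "0 < \<eta> x" by (rule abs_norm_pos[OF x x0])
  have coord: "cmod (x \<beta>) \<le> \<eta> x / ?e \<beta>" if "\<beta> \<in> ?K" for \<beta>
    using abs_norm_ge_coordinate[OF x that] abs_norm_unit_pos[OF that] by (simp add: field_simps)
  have "cmod (cmat_apply n k M x \<alpha>) \<le> (\<Sum>\<beta>\<in>?K. R * (\<eta> x / ?e \<beta>))" if \<alpha>: "\<alpha> \<in> ?K" for \<alpha>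
  proof -
    have "cmod (cmat_apply n k M x \<alpha>) \<le> (\<Sum>\<beta>\<in>?K. cmod (M \<alpha> \<beta>) * cmod (x \<beta>))"
      using \<alpha> norm_sum[of "\<lambda>\<beta>. M \<alpha> \<beta> * x \<beta>" ?K] by (simp add: cmat_apply_def norm_mult)
    also have "\<dots> \<le> (\<Sum>\<beta>\<in>?K. R * (\<eta> x / ?e \<beta>))"
      using M[OF \<alpha>] coord by (intro sum_mono mult_mono) (auto intro: order_trans[OF norm_ge_zero])
    finally show ?thesis .
  qed
  note bound = this
  have "\<eta> (cmat_apply n k M x) \<le> (\<Sum>\<alpha>\<in>?K. cmod (cmat_apply n k M x \<alpha>) * ?e \<alpha>)"
    by (rule abs_norm_le_sum_units[OF cmat_apply_in_cvecs])
  also have "\<dots> \<le> (\<Sum>\<alpha>\<in>?K. (\<Sum>\<beta>\<in>?K. R * (\<eta> x / ?e \<beta>)) * ?e \<alpha>)"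
    using bound abs_norm_unit_pos by (intro sum_mono mult_right_mono) (auto intro: less_imp_le)
  also have "\<dots> = R * (\<Sum>\<alpha>\<in>?K. \<Sum>\<beta>\<in>?K. ?e \<alpha> / ?e \<beta>) * \<eta> x"
    by (simp add: sum_distrib_left sum_distrib_right mult_ac)
  finally show ?thesis using x_pos by (simp add: field_simps)
qed

lemma bdd_above_op_norm_ratios:
  "bdd_above ((\<lambda>x. \<eta> (cmat_apply n k M x) / \<eta> x) ` (cvecs n k - {\<lambda>_. 0}))"
proof -
  let ?R = "\<Sum>\<alpha>\<in>ksubsets n k. \<Sum>\<beta>\<in>ksubsets n k. cmod (M \<alpha> \<beta>)"
  have "cmod (M \<alpha> \<beta>) \<le> ?R" if "\<alpha> \<in> ksubsets n k" "\<beta> \<in> ksubsets n k" for \<alpha> \<beta>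
    using that finite_ksubsets
    by (intro order_trans[OF _ member_le_sum[of \<alpha>]] member_le_sum) (auto intro: sum_nonneg)
  then have "\<eta> (cmat_apply n k M x) / \<eta> x \<le>
      ?R * (\<Sum>\<alpha>\<in>ksubsets n k. \<Sum>\<beta>\<in>ksubsets n k. \<eta> (indicator {\<alpha>}) / \<eta> (indicator {\<beta>}))"
    if "x \<in> cvecs n k - {\<lambda>_. 0}" for x
    using that by (intro op_norm_ratio_le) auto
  then show ?thesis by (rule bdd_aboveI2)
qed

lemma op_norm_apply_le:
  assumes x: "x \<in> cvecs n k"
  shows "\<eta> (cmat_apply n k M x) \<le> op_norm n k \<eta> M * \<eta> x"
proof (cases "x = (\<lambda>_. 0)")
  case x0: True
  then have "cmat_apply n k M x = (\<lambda>_. 0)" by (simp add: cmat_apply_def fun_eq_iff)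
  then show ?thesis using x0 abs_norm_eq_0_iff[OF x] by simp
next
  case False
  have "\<eta> (cmat_apply n k M x) / \<eta> x \<le> op_norm n k \<eta> M"
    unfolding op_norm_def using x False by (intro cSUP_upper bdd_above_op_norm_ratios) auto
  then show ?thesis using abs_norm_pos[OF x False] by (simp add: field_simps)
qed

lemma cvecs_minus_zero_nonempty: "k \<le> n \<Longrightarrow> cvecs n k - {\<lambda>_. 0} \<noteq> {}"
  using indicator_in_cvecs[OF initial_segment_in_ksubsets] by blast

lemma op_norm_nonneg:
  assumes "k \<le> n"
  shows "0 \<le> op_norm n k \<eta> M"
proof -
  obtain x where x: "x \<in> cvecs n k - {\<lambda>_. 0}" using cvecs_minus_zero_nonempty[OF assms] by blast
  have "0 \<le> \<eta> (cmat_apply n k M x) / \<eta> x"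
    using x cmat_apply_in_cvecs by (simp add: abs_norm_nonneg)
  also have "\<dots> \<le> op_norm n k \<eta> M"
    unfolding op_norm_def by (rule cSUP_upper[OF x bdd_above_op_norm_ratios])
  finally show ?thesis .
qed

lemma op_norm_le:
  assumes kn: "k \<le> n"
    and M: "\<And>\<alpha> \<beta>. \<alpha> \<in> ksubsets n k \<Longrightarrow> \<beta> \<in> ksubsets n k \<Longrightarrow> cmod (M \<alpha> \<beta>) \<le> R"
  shows "op_norm n k \<eta> M \<le>
    R * (\<Sum>\<alpha>\<in>ksubsets n k. \<Sum>\<beta>\<in>ksubsets n k. \<eta> (indicator {\<alpha>}) / \<eta> (indicator {\<beta>}))"
  unfolding op_norm_def using op_norm_ratio_le[OF M]
  by (intro cSUP_least[OF cvecs_minus_zero_nonempty[OF kn]]) auto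

end

section \<open>Norms on the column space dominate the coordinates\<close>

lemma convergent_subsequence_coordinates:
  fixes f :: "nat \<Rightarrow> nat \<Rightarrow> complex"
  assumes bounded: "\<And>m i. i < n \<Longrightarrow> cmod (f m i) \<le> B"
  obtains r l where "strict_mono r" "\<And>i. i < n \<Longrightarrow> (\<lambda>m. f (r m) i) \<longlonglongrightarrow> l i"
proof -
  \<comment> \<open>Bolzano--Weierstrass is applied to real and imaginary parts: \<open>real\<close> is \<open>heine_borel\<close>\<close>
  define part where "part = (\<lambda>(x :: nat \<Rightarrow> complex) (i :: nat, b :: bool). if b then Im (x i) else Re (x i))"
  have part_bounded: "bounded ((\<lambda>x. part x p) ` range f)" if p_in: "p \<in> {..<n} \<times> UNIV" for p
  proof (rule boundedI)
    fix y assume "y \<in> (\<lambda>x. part x p) ` range f"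
    then obtain m where y: "y = part (f m) p" by blast
    obtain i b where p: "p = (i, b)" and i: "i < n" using p_in by auto
    have "norm y \<le> cmod (f m i)"
      using abs_Re_le_cmod[of "f m i"] abs_Im_le_cmod[of "f m i"] by (cases b) (simp_all add: y p part_def)
    then show "norm y \<le> B" using bounded[OF i, of m] by linarith
  qed
  have "\<forall>\<delta>\<subseteq>{..<n} \<times> UNIV. \<exists>l r. strict_mono r \<and>
      (\<forall>e>0. eventually (\<lambda>m. \<forall>p\<in>\<delta>. dist (part (f (r m)) p) (part l p) < e) sequentially)"
  proof (rule compact_lemma_general[where unproj = "\<lambda>e i. Complex (e (i, False)) (e (i, True))"])
    show "part (\<lambda>i. Complex (e (i, False)) (e (i, True))) p = e p" for e p
      by (cases p) (simp add: part_def)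
    show "(\<lambda>i. Complex (part x (i, False)) (part x (i, True))) = x" for x
      by (simp add: part_def complex_surj)
  qed (use part_bounded in auto)
  then obtain l r where r: "strict_mono r"
    and l: "\<And>e. e > 0 \<Longrightarrow> eventually (\<lambda>m. \<forall>p\<in>{..<n} \<times> UNIV. dist (part (f (r m)) p) (part l p) < e) sequentially"
    by blast
  have part_lim: "(\<lambda>m. part (f (r m)) (i, b)) \<longlonglongrightarrow> part l (i, b)" if "i < n" for i b
  proof (rule tendstoI)
    fix e :: real assume "e > 0"
    then show "eventually (\<lambda>m. dist (part (f (r m)) (i, b)) (part l (i, b)) < e) sequentially"
      by (rule eventually_mono[OF l]) (use that in auto)
  qed
  have "(\<lambda>m. f (r m) i) \<longlonglongrightarrow> l i" if "i < n" for i
  proof -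
    have "(\<lambda>m. Complex (Re (f (r m) i)) (Im (f (r m) i))) \<longlonglongrightarrow> Complex (Re (l i)) (Im (l i))"
      using part_lim[OF that, of False] part_lim[OF that, of True]
      by (intro tendsto_Complex) (simp_all add: part_def)
    then show ?thesis by (simp add: complex_surj)
  qed
  then show thesis using that r by blast
qed

context
  fixes n :: nat and \<nu> :: "complex vec \<Rightarrow> real"
  assumes \<nu>: "vec_norm_on n \<nu>"
begin

lemma vec_norm_nonneg: "v \<in> carrier_vec n \<Longrightarrow> 0 \<le> \<nu> v"
  using \<nu> unfolding vec_norm_on_def by blast

lemma vec_norm_eq_0_iff: "v \<in> carrier_vec n \<Longrightarrow> \<nu> v = 0 \<longleftrightarrow> v = 0\<^sub>v n"
  using \<nu> unfolding vec_norm_on_def by blast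

lemma vec_norm_scale: "v \<in> carrier_vec n \<Longrightarrow> \<nu> (c \<cdot>\<^sub>v v) = cmod c * \<nu> v"
  using \<nu> unfolding vec_norm_on_def by blast

lemma vec_norm_triangle: "v \<in> carrier_vec n \<Longrightarrow> w \<in> carrier_vec n \<Longrightarrow> \<nu> (v + w) \<le> \<nu> v + \<nu> w"
  using \<nu> unfolding vec_norm_on_def by blast

lemma vec_norm_unit_exists:
  assumes "0 < n"
  obtains u where "u \<in> carrier_vec n" "\<nu> u = 1"
proof -
  let ?e = "unit_vec n 0 :: complex vec"
  have "?e \<noteq> 0\<^sub>v n" using assms by (metis index_unit_vec(1) index_zero_vec(1) zero_neq_one)
  then have "\<nu> ?e > 0" using vec_norm_eq_0_iff[of ?e] vec_norm_nonneg[of ?e] by simp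
  then have "\<nu> (complex_of_real (inverse (\<nu> ?e)) \<cdot>\<^sub>v ?e) = 1" by (simp add: vec_norm_scale norm_inverse)
  then show thesis by (rule that[rotated]) simp
qed

lemma vec_norm_le_sum_units:
  assumes v: "v \<in> carrier_vec n"
  shows "\<nu> v \<le> (\<Sum>i<n. cmod (v $ i) * \<nu> (unit_vec n i))"
proof -
  have prefix: "\<nu> (vec n (\<lambda>i. if i < j then v $ i else 0)) \<le> (\<Sum>i<j. cmod (v $ i) * \<nu> (unit_vec n i))"
    if "j \<le> n" for j
    using that
  proof (induction j)
    case 0
    have "vec n (\<lambda>i. if i < 0 then v $ i else 0) = 0\<^sub>v n" by auto
    then show ?case using vec_norm_eq_0_iff[of "0\<^sub>v n"] by simp
  next
    case (Suc j)
    have "vec n (\<lambda>i. if i < Suc j then v $ i else 0) =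
        vec n (\<lambda>i. if i < j then v $ i else 0) + (v $ j) \<cdot>\<^sub>v unit_vec n j"
      using Suc.prems by (intro eq_vecI) (auto simp: less_Suc_eq)
    then have "\<nu> (vec n (\<lambda>i. if i < Suc j then v $ i else 0)) \<le>
        \<nu> (vec n (\<lambda>i. if i < j then v $ i else 0)) + cmod (v $ j) * \<nu> (unit_vec n j)"
      using vec_norm_triangle[of "vec n (\<lambda>i. if i < j then v $ i else 0)" "(v $ j) \<cdot>\<^sub>v unit_vec n j"]
        vec_norm_scale[of "unit_vec n j"] by simp
    then show ?case using Suc by simp
  qed
  have "vec n (\<lambda>i. if i < n then v $ i else 0) = v" using v by auto
  then show ?thesis using prefix[OF order_refl] by simp
qed

lemma vec_norm_le_add_dist:
  assumes v: "v \<in> carrier_vec n" and w: "w \<in> carrier_vec n"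
  shows "\<nu> v \<le> \<nu> w + (\<Sum>i<n. cmod (v $ i - w $ i) * \<nu> (unit_vec n i))"
proof -
  have "v = w + (v - w)" using v w by (intro eq_vecI) auto
  then have "\<nu> v = \<nu> (w + (v - w))" by simp
  also have "\<dots> \<le> \<nu> w + \<nu> (v - w)" using v w by (intro vec_norm_triangle) auto
  also have "\<nu> (v - w) \<le> (\<Sum>i<n. cmod ((v - w) $ i) * \<nu> (unit_vec n i))"
    using v w by (intro vec_norm_le_sum_units) auto
  also have "\<dots> = (\<Sum>i<n. cmod (v $ i - w $ i) * \<nu> (unit_vec n i))"
    using v w by (intro sum.cong) auto
  finally show ?thesis by simp
qed

lemma vec_norm_lower_bound: "\<exists>c>0. \<forall>v\<in>carrier_vec n. (\<Sum>i<n. cmod (v $ i)) = 1 \<longrightarrow> c \<le> \<nu> v"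
proof (rule ccontr)
  assume "\<not> ?thesis"
  then have "\<forall>m::nat. \<exists>v. v \<in> carrier_vec n \<and> (\<Sum>i<n. cmod (v $ i)) = 1 \<and> \<nu> v < inverse (Suc m)"
    by (metis not_le of_nat_0_less_iff inverse_positive_iff_positive zero_less_Suc)
  then obtain V where V: "\<And>m. V m \<in> carrier_vec n" and V1: "\<And>m. (\<Sum>i<n. cmod (V m $ i)) = 1"
    and V_small: "\<And>m. \<nu> (V m) < inverse (Suc m)"
    by metis
  have "cmod (V m $ i) \<le> 1" if "i < n" for m i
    using member_le_sum[of i "{..<n}" "\<lambda>i. cmod (V m $ i)"] V1[of m] that by simp
  then obtain r l where r: "strict_mono r" and l: "\<And>i. i < n \<Longrightarrow> (\<lambda>m. V (r m) $ i) \<longlonglongrightarrow> l i"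
    using convergent_subsequence_coordinates[of n "\<lambda>m i. V m $ i" 1] by blast
  define y where "y = vec n l"
  have y: "y \<in> carrier_vec n" unfolding y_def by simp
  \<comment> \<open>the limit has l1 norm one, but norm zero\<close>
  have "(\<lambda>m. \<Sum>i<n. cmod (V (r m) $ i)) \<longlonglongrightarrow> (\<Sum>i<n. cmod (l i))"
    using l by (intro tendsto_sum tendsto_norm) auto
  then have y1: "(\<Sum>i<n. cmod (l i)) = 1" using V1 by (simp add: LIMSEQ_const_iff)
  have bound: "\<nu> y \<le> inverse (Suc (r m)) + (\<Sum>i<n. cmod (l i - V (r m) $ i) * \<nu> (unit_vec n i))" for m
    using vec_norm_le_add_dist[OF y V[of "r m"]] V_small[of "r m"] by (simp add: y_def)
  have "(\<lambda>m. inverse (Suc (r m)) + (\<Sum>i<n. cmod (l i - V (r m) $ i) * \<nu> (unit_vec n i))) \<longlonglongrightarrow> 0"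
  proof (intro tendsto_add_zero tendsto_null_sum tendsto_mult_left_zero tendsto_norm_zero)
    show "(\<lambda>m. inverse (real (Suc (r m)))) \<longlonglongrightarrow> 0"
      using LIMSEQ_subseq_LIMSEQ[OF LIMSEQ_inverse_real_of_nat r] by (simp add: o_def)
    show "(\<lambda>m. l i - V (r m) $ i) \<longlonglongrightarrow> 0" if "i \<in> {..<n}" for i
      using tendsto_diff[OF tendsto_const[of "l i"] l[of i]] that by simp
  qed
  then have "\<nu> y \<le> 0" using bound by (intro LIMSEQ_le_const) auto
  then have "y = 0\<^sub>v n" using vec_norm_nonneg[OF y] vec_norm_eq_0_iff[OF y] by simp
  then have "l i = 0" if "i < n" for i using that by (metis y_def index_vec index_zero_vec(1))
  then show False using y1 by simp
qed

lemma vec_norm_bounds_coordinates: "\<exists>K\<ge>0. \<forall>v\<in>carrier_vec n. \<forall>i<n. cmod (v $ i) \<le> K * \<nu> v"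
proof -
  obtain c where c: "c > 0" and lower: "\<And>v. v \<in> carrier_vec n \<Longrightarrow> (\<Sum>i<n. cmod (v $ i)) = 1 \<Longrightarrow> c \<le> \<nu> v"
    using vec_norm_lower_bound by blast
  have "cmod (v $ i) \<le> inverse c * \<nu> v" if v: "v \<in> carrier_vec n" and i: "i < n" for v i
  proof -
    define s where "s = (\<Sum>i<n. cmod (v $ i))"
    have vi: "cmod (v $ i) \<le> s" unfolding s_def using i by (intro member_le_sum) auto
    show ?thesis
    proof (cases "s = 0")
      case True
      then show ?thesis using vi vec_norm_nonneg[OF v] c by simp
    next
      case False
      then have s: "s > 0" using sum_nonneg[of "{..<n}" "\<lambda>i. cmod (v $ i)"] unfolding s_def by simp
      define w where "w = complex_of_real (inverse s) \<cdot>\<^sub>v v"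
      have w: "w \<in> carrier_vec n" using v by (simp add: w_def)
      have "(\<Sum>i<n. cmod (w $ i)) = (\<Sum>i<n. inverse s * cmod (v $ i))"
        using v s by (intro sum.cong) (auto simp: w_def norm_mult norm_inverse)
      also have "\<dots> = 1" unfolding sum_distrib_left[symmetric] s_def[symmetric] using s by simp
      finally have "c \<le> \<nu> w" by (rule lower[OF w])
      also have "\<nu> w = inverse s * \<nu> v" using v s by (simp add: w_def vec_norm_scale norm_inverse)
      finally have "c * s \<le> \<nu> v" using s by (simp add: field_simps)
      then have "c * cmod (v $ i) \<le> \<nu> v" using mult_left_mono[OF vi, of c] c by linarith
      then show ?thesis using c by (simp add: field_simps)
    qed
  qed
  then show ?thesis using c by (intro exI[of _ "inverse c"]) auto
qed

end

section \<open>Compound matrices of column-scaled matrices\<close>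

lemma norm_det_bound:
  fixes M :: "complex mat"
  assumes M: "M \<in> carrier_mat k k" and bound: "\<And>i j. i < k \<Longrightarrow> j < k \<Longrightarrow> cmod (M $$ (i, j)) \<le> K"
  shows "cmod (det M) \<le> fact k * K ^ k"
proof -
  have "cmod (det M) \<le> (\<Sum>p | p permutes {0..<k}. cmod (signof p * (\<Prod>i = 0..<k. M $$ (i, p i))))"
    unfolding det_def'[OF M] by (rule norm_sum)
  also have "\<dots> \<le> (\<Sum>p | p permutes {0..<k}. K ^ k)"
  proof (rule sum_mono)
    fix p assume "p \<in> {p. p permutes {0..<k}}"
    then have p: "p i < k" if "i < k" for i using that permutes_in_image by fastforce
    have "cmod (signof p * (\<Prod>i = 0..<k. M $$ (i, p i))) = (\<Prod>i = 0..<k. cmod (M $$ (i, p i)))"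
      by (simp add: norm_mult prod_norm sign_def)
    also have "\<dots> \<le> (\<Prod>i = 0..<k. K)" using p bound by (intro prod_mono) auto
    finally show "cmod (signof p * (\<Prod>i = 0..<k. M $$ (i, p i))) \<le> K ^ k" by simp
  qed
  also have "\<dots> = fact k * K ^ k" using card_permutations[of "{0..<k}" k] by simp
  finally show ?thesis .
qed

lemma norm_compound_bound:
  assumes B: "B \<in> carrier_mat n n" and bound: "\<And>i j. i < n \<Longrightarrow> j < n \<Longrightarrow> cmod (B $$ (i, j)) \<le> K"
    and K: "0 \<le> K"
  shows "cmod (compound k B \<alpha> \<beta>) \<le> fact k * K ^ k"
proof (cases "\<alpha> \<in> ksubsets n k \<and> \<beta> \<in> ksubsets n k")
  case True
  then have "cmod (det (submatrix B \<alpha> \<beta>)) \<le> fact k * K ^ k"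
    using submatrix_square_index[OF B] pick_ksubset(2) bound
    by (intro norm_det_bound[OF submatrix_square_carrier[OF B]]) auto
  then show ?thesis using True B by (simp add: compound_def)
qed (use B K in \<open>auto simp: compound_def\<close>)

lemma det_scale_cols:
  fixes M N :: "'a::comm_ring_1 mat"
  assumes M: "M \<in> carrier_mat k k" and N: "N \<in> carrier_mat k k"
    and scale: "\<And>i j. i < k \<Longrightarrow> j < k \<Longrightarrow> M $$ (i, j) = N $$ (i, j) * c j"
  shows "det M = det N * prod c {0..<k}"
proof -
  have "transpose_mat M = mat\<^sub>r k k (\<lambda>j. c j \<cdot>\<^sub>v col N j)"
    using M N scale by (intro eq_matI) auto
  moreover have "transpose_mat N = mat\<^sub>r k k (\<lambda>j. col N j)"
    using N by (intro eq_matI) auto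
  ultimately show ?thesis
    using det_rows_mul[of "\<lambda>j. col N j" k c] N det_transpose[OF M] det_transpose[OF N]
    by (auto simp: mult.commute)
qed

lemma compound_scale_cols:
  assumes A: "A \<in> carrier_mat n n" and B: "B \<in> carrier_mat n n"
    and scale: "\<And>i j. i < n \<Longrightarrow> j < n \<Longrightarrow> A $$ (i, j) = B $$ (i, j) * c j"
  shows "compound k A \<alpha> \<beta> = compound k B \<alpha> \<beta> * (\<Prod>j\<in>\<beta>. c j)"
proof (cases "\<alpha> \<in> ksubsets n k \<and> \<beta> \<in> ksubsets n k")
  case True
  then have \<alpha>: "\<alpha> \<in> ksubsets n k" and \<beta>: "\<beta> \<in> ksubsets n k" by auto
  have "det (submatrix A \<alpha> \<beta>) = det (submatrix B \<alpha> \<beta>) * (\<Prod>j\<in>{0..<k}. c (pick \<beta> j))"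
    using submatrix_square_index[OF A \<alpha> \<beta>] submatrix_square_index[OF B \<alpha> \<beta>] pick_ksubset[OF \<alpha>] pick_ksubset[OF \<beta>]
    by (intro det_scale_cols submatrix_square_carrier[OF A \<alpha> \<beta>] submatrix_square_carrier[OF B \<alpha> \<beta>]) (auto intro: scale)
  also have "(\<Prod>j\<in>{0..<k}. c (pick \<beta> j)) = (\<Prod>j\<in>\<beta>. c j)"
    using prod.reindex_bij_betw[OF bij_betw_pick[OF ksubsetsD(1)[OF \<beta>]]] ksubsetsD(2)[OF \<beta>] by simp
  finally show ?thesis using \<alpha> \<beta> A B by (simp add: compound_def)
qed (use A B in \<open>auto simp: compound_def\<close>)

lemma normalize_columns:
  assumes \<nu>: "vec_norm_on n \<nu>" and A: "A \<in> carrier_mat n n" and n: "0 < n"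
  obtains B where "B \<in> carrier_mat n n" "\<And>j. j < n \<Longrightarrow> \<nu> (col B j) = 1"
    "\<And>i j. i < n \<Longrightarrow> j < n \<Longrightarrow> A $$ (i, j) = B $$ (i, j) * complex_of_real (\<nu> (col A j))"
proof -
  define d where "d j = \<nu> (col A j)" for j
  have d: "0 \<le> d j" if "j < n" for j unfolding d_def using A that by (simp add: vec_norm_nonneg[OF \<nu>])
  obtain u where u: "u \<in> carrier_vec n" and u1: "\<nu> u = 1" using vec_norm_unit_exists[OF \<nu> n] .
  \<comment> \<open>zero columns of \<open>A\<close> are replaced by an arbitrary unit vector\<close>
  define B where "B = mat n n (\<lambda>(i, j). if d j = 0 then u $ i else A $$ (i, j) / complex_of_real (d j))"
  show thesis
  proof (rule that)
    show B: "B \<in> carrier_mat n n" unfolding B_def by simp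
    show "\<nu> (col B j) = 1" if j: "j < n" for j
    proof (cases "d j = 0")
      case True
      then have "col B j = u" using j u unfolding B_def by (intro eq_vecI) auto
      then show ?thesis using u1 by simp
    next
      case False
      then have "col B j = complex_of_real (inverse (d j)) \<cdot>\<^sub>v col A j"
        using j A unfolding B_def by (intro eq_vecI) (auto simp: field_simps)
      then show ?thesis using False d[OF j] A j vec_norm_scale[OF \<nu>] by (simp add: d_def norm_inverse)
    qed
    show "A $$ (i, j) = B $$ (i, j) * complex_of_real (\<nu> (col A j))" if ij: "i < n" "j < n" for i j
    proof (cases "d j = 0")
      case True
      then have "col A j = 0\<^sub>v n" using A ij vec_norm_eq_0_iff[OF \<nu>] by (simp add: d_def)
      then have "col A j $ i = 0" using ij by simp
      then have "A $$ (i, j) = 0" using A ij by simp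
      then show ?thesis using True by (simp add: d_def)
    next
      case False
      then show ?thesis using ij by (simp add: B_def d_def)
    qed
  qed
qed

section \<open>The constant \<open>\<theta>\<^sub>k\<close>\<close>

context
  fixes n k :: nat and \<nu> :: "complex vec \<Rightarrow> real" and \<eta> :: "(nat set \<Rightarrow> complex) \<Rightarrow> real"
  assumes \<nu>: "vec_norm_on n \<nu>" and \<eta>: "abs_vec_norm_on n k \<eta>" and kn: "k \<le> n"
begin

lemma bdd_above_theta_set:
  "bdd_above {op_norm n k \<eta> (compound k B) | B. B \<in> carrier_mat n n \<and> (\<forall>i<n. \<nu> (col B i) = 1)}"
proof -
  obtain K where K: "0 \<le> K" and coord: "\<And>v i. v \<in> carrier_vec n \<Longrightarrow> i < n \<Longrightarrow> cmod (v $ i) \<le> K * \<nu> v"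
    using vec_norm_bounds_coordinates[OF \<nu>] by blast
  have "op_norm n k \<eta> (compound k B) \<le> fact k * K ^ k *
      (\<Sum>\<alpha>\<in>ksubsets n k. \<Sum>\<beta>\<in>ksubsets n k. \<eta> (indicator {\<alpha>}) / \<eta> (indicator {\<beta>}))"
    if B: "B \<in> carrier_mat n n" and unit: "\<forall>i<n. \<nu> (col B i) = 1" for B
  proof (intro op_norm_le[OF \<eta> kn] norm_compound_bound[OF B _ K])
    fix i j assume "i < n" "j < n"
    then show "cmod (B $$ (i, j)) \<le> K" using coord[of "col B j" i] B unit by simp
  qed
  then show ?thesis by (intro bdd_aboveI) blast
qed

lemma op_norm_compound_le_theta:
  "B \<in> carrier_mat n n \<Longrightarrow> \<forall>i<n. \<nu> (col B i) = 1 \<Longrightarrow> op_norm n k \<eta> (compound k B) \<le> theta n k \<eta> \<nu>"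
  unfolding theta_def by (rule cSup_upper[OF _ bdd_above_theta_set]) blast

lemma theta_nonneg: "0 < n \<Longrightarrow> 0 \<le> theta n k \<eta> \<nu>"
  using normalize_columns[OF \<nu> one_carrier_mat] op_norm_compound_le_theta op_norm_nonneg[OF \<eta> kn]
  by (metis order_trans)

end

lemma eigenvalue_product_le_theta_cols:
  fixes A :: "complex mat"
  assumes k: "0 < k" "k \<le> n" and \<nu>: "vec_norm_on n \<nu>" and \<eta>: "abs_vec_norm_on n k \<eta>"
    and A: "A \<in> carrier_mat n n" and len: "length es = n"
    and cp: "char_poly A = (\<Prod>i<n. [:- (es ! i), 1:])"
  shows "cmod (\<Prod>i<k. es ! i) \<le> theta n k \<eta> \<nu> * Max ((\<lambda>\<alpha>. \<Prod>i\<in>\<alpha>. \<nu> (col A i)) ` ksubsets n k)"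
    (is "_ \<le> ?\<theta> * ?D")
proof -
  let ?ev = "\<Prod>i<k. es ! i" and ?d = "\<lambda>\<beta>. \<Prod>j\<in>\<beta>. \<nu> (col A j)"
  have n: "0 < n" using k by simp
  obtain x where x: "x \<in> cvecs n k" and x0: "x \<noteq> (\<lambda>_. 0)"
    and eigen: "cmat_apply n k (compound k A) x = (\<lambda>\<alpha>. ?ev * x \<alpha>)"
    using compound_eigenvector[OF A k(2) len cp] .
  obtain B where B: "B \<in> carrier_mat n n" and unit: "\<And>j. j < n \<Longrightarrow> \<nu> (col B j) = 1"
    and scale: "\<And>i j. i < n \<Longrightarrow> j < n \<Longrightarrow> A $$ (i, j) = B $$ (i, j) * complex_of_real (\<nu> (col A j))"
    using normalize_columns[OF \<nu> A n] by blast
  \<comment> \<open>\<open>y = C\<^sub>k(D) x\<close> for \<open>D\<close> the diagonal matrix of the column norms of \<open>A\<close>\<close>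
  define y where "y \<beta> = complex_of_real (?d \<beta>) * x \<beta>" for \<beta>
  have y: "y \<in> cvecs n k" using cvecsD[OF x] by (intro cvecsI) (simp add: y_def)
  have d: "0 \<le> ?d \<beta> \<and> ?d \<beta> \<le> ?D" if "\<beta> \<in> ksubsets n k" for \<beta>
    using that ksubsetsD(3)[OF that] A finite_ksubsets
    by (auto intro!: prod_nonneg vec_norm_nonneg[OF \<nu>] Max_ge)
  have D: "0 \<le> ?D" using d[OF initial_segment_in_ksubsets[OF k(2)]] by linarith
  have CAB: "cmat_apply n k (compound k A) x = cmat_apply n k (compound k B) y"
    unfolding cmat_apply_def y_def
    by (simp add: fun_eq_iff compound_scale_cols[OF A B scale] of_real_prod mult.assoc)
  have "cmod ?ev * \<eta> x = \<eta> (\<lambda>\<alpha>. ?ev * x \<alpha>)" by (rule abs_norm_scale[OF \<eta> x, symmetric])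
  also have "\<dots> = \<eta> (cmat_apply n k (compound k B) y)" unfolding eigen[symmetric] CAB ..
  also have "\<dots> \<le> op_norm n k \<eta> (compound k B) * \<eta> y" by (rule op_norm_apply_le[OF \<eta> y])
  also have "\<dots> \<le> ?\<theta> * \<eta> y"
    using op_norm_compound_le_theta[OF \<nu> \<eta> k(2) B] unit abs_norm_nonneg[OF \<eta> y]
    by (simp add: mult_right_mono)
  also have "\<eta> y \<le> ?D * \<eta> x"
    unfolding y_def by (rule abs_norm_scale_coordinates_le[OF \<eta> x d D])
  finally have "cmod ?ev * \<eta> x \<le> (?\<theta> * ?D) * \<eta> x"
    using theta_nonneg[OF \<nu> \<eta> k(2) n] by (simp add: mult_left_mono mult.assoc)
  then show ?thesis using abs_norm_pos[OF \<eta> x x0] by simp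
qed

theorem theorem3p1:
  fixes n k :: nat and \<nu> :: "complex vec \<Rightarrow> real" and \<eta> :: "(nat set \<Rightarrow> complex) \<Rightarrow> real"
    and A :: "complex mat" and es :: "complex list"
  assumes "0 < k" and "k \<le> n"
    and "vec_norm_on n \<nu>"
    and "abs_vec_norm_on n k \<eta>"
    and "A \<in> carrier_mat n n"
    and "length es = n"
    and "char_poly A = (\<Prod>i<n. [:- (es ! i), 1:])"
    and "sorted_wrt (\<lambda>a b. cmod b \<le> cmod a) es"
  shows "cmod (\<Prod>i<k. es ! i) \<le> theta n k \<eta> \<nu> *
           min (Max ((\<lambda>\<alpha>. \<Prod>i\<in>\<alpha>. \<nu> (col A i)) ` ksubsets n k))
               (Max ((\<lambda>\<alpha>. \<Prod>i\<in>\<alpha>. \<nu> (row A i)) ` ksubsets n k))"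
proof -
  have cols: "cmod (\<Prod>i<k. es ! i) \<le> theta n k \<eta> \<nu> * Max ((\<lambda>\<alpha>. \<Prod>i\<in>\<alpha>. \<nu> (col A i)) ` ksubsets n k)"
    by (rule eigenvalue_product_le_theta_cols[OF assms(1-7)])
  have At: "transpose_mat A \<in> carrier_mat n n" using assms(5) by simp
  have "char_poly (transpose_mat A) = (\<Prod>i<n. [:- (es ! i), 1:])"
    using char_poly_transpose_mat[OF assms(5)] assms(7) by simp
  then have "cmod (\<Prod>i<k. es ! i) \<le>
      theta n k \<eta> \<nu> * Max ((\<lambda>\<alpha>. \<Prod>i\<in>\<alpha>. \<nu> (col (transpose_mat A) i)) ` ksubsets n k)"
    by (rule eigenvalue_product_le_theta_cols[OF assms(1-4) At assms(6)])
  also have "(\<lambda>\<alpha>. \<Prod>i\<in>\<alpha>. \<nu> (col (transpose_mat A) i)) ` ksubsets n k =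
      (\<lambda>\<alpha>. \<Prod>i\<in>\<alpha>. \<nu> (row A i)) ` ksubsets n k"
    using assms(5) ksubsetsD(3) by (intro image_cong refl prod.cong) force+
  finally show ?thesis using cols by (simp add: min_def)
qed

end
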